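(* The action of $\mathfrak{gl}(\mathring{\mathfrak g})[t,t^{-1}]\rtimes\mathbb C\mathsf D$ on $\overline{\mathrm{Der}}\,\mathcal O$ given by $x\cdot v=[\iota(x),v]$ stabilizes the Lie subalgebra $\mathrm{Der}_w\mathcal O$.
   Context: $\mathring{\mathfrak g}$ is a finite-dimensional simple complex Lie algebra with basis $\{J_a\}_{a\in\mathcal I}$ ($\mathcal I$ finite). $\mathcal O=\mathbb C[X^{a,n}]_{(a,n)\in\mathcal I\times\mathbb Z}$, $D_{a,n}=\partial/\partial X^{a,n}$, $\overline{\mathrm{Der}}\,\mathcal O$ is the Lie algebra of possibly infinite formal sums $\sum_{(a,n)}P^{a,n}(X)D_{a,n}$ (bracket as commutator of derivations; each coefficient a finite sum). A collection $\{P^{a,n}\}$ has widening gap if for every $K\ge1$, $P^{a,n}\in\mathbb C[X^{b,m}:|m|<|n|-K]$ for all $a$, for all but finitely many $n\in\mathbb Z$; $\mathrm{Der}_w\mathcal O$ is the Lie subalgebra of sums with widening-gap coefficients. The loop algebra $\mathfrak{gl}(\mathring{\mathfrak g})[t,t^{-1}]$ has basis $S^a_{b,n}$ ($a,b\in\mathcal I$, $n\in\mathbb Z$) with $[S^a_{b,n},S^c_{d,m}]=\delta^c_bS^a_{d,n+m}-\delta^a_dS^c_{b,n+m}$, and $\mathsf D$ is the derivation with $[\mathsf D,S^a_{b,n}]=nS^a_{b,n}$. The embedding $\iota:\mathfrak{gl}(\mathring{\mathfrak g})[t,t^{-1}]\rtimes\mathbb C\mathsf D\hookrightarrow\overline{\mathrm{Der}}\,\mathcal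 O$ is $\iota(S^b_{c,n})=\sum_{m\in\mathbb Z}X^{b,m-n}D_{c,m}$, $\iota(\mathsf D)=\sum_{a\in\mathcal I,m\in\mathbb Z}mX^{a,m}D_{a,m}$. *)

theory Defs
  imports Complex_Main "HOL-Library.Poly_Mapping"
begin

text \<open>Variables X^{a,n} are indexed by pairs (a,n) with a in a finite index type 'i
  (the basis index set of the simple Lie algebra) and n an integer.
  Monomials are finitely supported exponent maps; polynomials are finitely
  supported coefficient maps on monomials (the polynomial ring O).\<close>

type_synonym 'i mon = "('i \<times> int) \<Rightarrow>\<^sub>0 nat"
type_synonym 'i cpoly = "'i mon \<Rightarrow>\<^sub>0 complex"

text \<open>An element of overline Der O: the family of coefficients P^{a,n}.\<close>
type_synonym 'i der = "('i \<times> int) \<Rightarrow> 'i cpoly"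

definition Xv :: "('i \<times> int) \<Rightarrow> 'i cpoly" where
  "Xv u = Poly_Mapping.single (Poly_Mapping.single u 1) 1"

definition cconst :: "complex \<Rightarrow> 'i cpoly" where
  "cconst z = Poly_Mapping.single 0 z"

definition vars :: "'i cpoly \<Rightarrow> ('i \<times> int) set" where
  "vars p = {u. \<exists>m\<in>Poly_Mapping.keys p. u \<in> Poly_Mapping.keys m}"

definition pderiv_var :: "('i \<times> int) \<Rightarrow> 'i cpoly \<Rightarrow> 'i cpoly" where
  "pderiv_var u p = (\<Sum>m\<in>Poly_Mapping.keys p.
      Poly_Mapping.single (m - Poly_Mapping.single u (1::nat))
        (of_nat (Poly_Mapping.lookup (m :: 'i mon) u) * Poly_Mapping.lookup p m))"

text \<open>Commutator of derivations sum P^u D_u and sum Q^u D_u; the coefficient of D_w is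
  sum_u (P^u D_u Q^w - Q^u D_u P^w), where only the (finitely many) variables
  occurring in Q^w resp. P^w contribute.\<close>
definition der_bracket :: "'i der \<Rightarrow> 'i der \<Rightarrow> 'i der" where
  "der_bracket P Q = (\<lambda>w.
      (\<Sum>u\<in>vars (Q w). P u * pderiv_var u (Q w))
    - (\<Sum>u\<in>vars (P w). Q u * pderiv_var u (P w)))"

definition widening_gap :: "'i der \<Rightarrow> bool" where
  "widening_gap P \<longleftrightarrow> (\<forall>K::int. K \<ge> 1 \<longrightarrow>
      finite {n::int. \<exists>a. \<not> vars (P (a, n)) \<subseteq> {(b, m). \<bar>m\<bar> < \<bar>n\<bar> - K}})"

definition Der_w :: "'i der set" where
  "Der_w = {P. widening_gap P}"

text \<open>An element x is
  sum c(b,c',n) S^b_{c',n} + d D, with finitely supported coefficients c.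
  iota(S^b_{c',n}) = sum_m X^{b,m-n} D_{c',m}; iota(D) = sum_{a,m} m X^{a,m} D_{a,m}.\<close>
definition iota :: "(('i \<times> 'i \<times> int) \<Rightarrow>\<^sub>0 complex) \<Rightarrow> complex \<Rightarrow> 'i der" where
  "iota c d = (\<lambda>(a, m).
      (\<Sum>(b, c', n)\<in>Poly_Mapping.keys c.
          if c' = a then cconst (Poly_Mapping.lookup c (b, c', n)) * Xv (b, m - n) else 0)
    + cconst (d * of_int m) * Xv (a, m))"

end

(* In iota(x) the coefficient of D_(a,n) is a linear form in variables X^(b,m) with
   |m - n| <= L, where L is the largest |k| among the loop degrees occurring in x.
   Hence the coefficient of D_(a,n) in [iota(x), v] only involves the variables of
   v(a,n), variables within distance L of those, and the variables of v(b,m) for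
   |m - n| <= L (differentiating a linear form leaves a constant).  So the gap K for
   [iota(x), v] holds at n as soon as the gap K + L for v holds at every level within
   distance L of n, and the exceptional levels for K lie within distance L of the
   finitely many exceptional levels of v for K + L. *)

theory Submission
  imports Defs
begin

definition linear_form :: "'i cpoly \<Rightarrow> bool" where
  "linear_form p \<longleftrightarrow> Poly_Mapping.keys p \<subseteq> range (\<lambda>u. Poly_Mapping.single u 1)"

definition gap_at :: "int \<Rightarrow> 'i der \<Rightarrow> int \<Rightarrow> bool" where
  "gap_at K P n \<longleftrightarrow> (\<forall>a. vars (P (a, n)) \<subseteq> {(b, m). \<bar>m\<bar> < \<bar>n\<bar> - K})"

definition shift_bounded :: "int \<Rightarrow> 'i der \<Rightarrow> bool" where
  "shift_bounded L P \<longleftrightarrow> (\<forall>a n b m. (b, m) \<in> vars (P (a, n)) \<longrightarrow> \<bar>m - n\<bar> \<le> L)"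

lemma widening_gap_iff_gap_at:
  "widening_gap P \<longleftrightarrow> (\<forall>K\<ge>1. finite {n. \<not> gap_at K P n})"
  unfolding widening_gap_def gap_at_def by simp

lemma vars_diff: "vars (p - q) \<subseteq> vars p \<union> vars q"
  using keys_diff[of p q] unfolding vars_def by blast

lemma vars_sum: "vars (sum f A) \<subseteq> (\<Union>a\<in>A. vars (f a))"
  using keys_sum[of f A] unfolding vars_def by blast

lemma vars_mult: "vars (p * q) \<subseteq> vars p \<union> vars q"
proof
  fix u assume "u \<in> vars (p * q)"
  then obtain m where m: "m \<in> Poly_Mapping.keys (p * q)" "u \<in> Poly_Mapping.keys m"
    unfolding vars_def by blast
  then obtain m1 m2 where "m = m1 + m2" "m1 \<in> Poly_Mapping.keys p" "m2 \<in> Poly_Mapping.keys q"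
    using keys_mult[of p q] by blast
  with m keys_add[of m1 m2] show "u \<in> vars p \<union> vars q"
    unfolding vars_def by blast
qed

lemma keys_pderiv_var:
  "Poly_Mapping.keys (pderiv_var u p)
     \<subseteq> (\<lambda>m. m - Poly_Mapping.single u 1) ` {m \<in> Poly_Mapping.keys p. Poly_Mapping.lookup m u \<noteq> 0}"
proof
  fix m' assume "m' \<in> Poly_Mapping.keys (pderiv_var u p)"
  then obtain m where m: "m \<in> Poly_Mapping.keys p"
    and m': "m' \<in> Poly_Mapping.keys (Poly_Mapping.single (m - Poly_Mapping.single u 1)
                 (of_nat (Poly_Mapping.lookup m u) * Poly_Mapping.lookup p m :: complex))"
    unfolding pderiv_var_def by (rule UN_E[OF subsetD[OF keys_sum]])
  from m' have "m' = m - Poly_Mapping.single u 1" and "Poly_Mapping.lookup m u \<noteq> 0"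
    by (simp_all split: if_splits)
  with m show "m' \<in> (\<lambda>m. m - Poly_Mapping.single u 1) ` {m \<in> Poly_Mapping.keys p. Poly_Mapping.lookup m u \<noteq> 0}"
    by blast
qed

lemma vars_pderiv_var: "vars (pderiv_var u p) \<subseteq> vars p"
proof
  fix x assume "x \<in> vars (pderiv_var u p)"
  then obtain m' where "m' \<in> Poly_Mapping.keys (pderiv_var u p)" "x \<in> Poly_Mapping.keys m'"
    unfolding vars_def by blast
  then obtain m where "m \<in> Poly_Mapping.keys p" "x \<in> Poly_Mapping.keys (m - Poly_Mapping.single u 1)"
    using keys_pderiv_var by blast
  moreover have "Poly_Mapping.keys (m - Poly_Mapping.single u 1) \<subseteq> Poly_Mapping.keys m"
    by (auto simp: in_keys_iff lookup_minus)
  ultimately show "x \<in> vars p"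
    unfolding vars_def by blast
qed

lemma vars_pderiv_var_linear_form:
  assumes "linear_form p"
  shows "vars (pderiv_var u p) = {}"
proof -
  have "Poly_Mapping.keys (pderiv_var u p) \<subseteq> {0}"
  proof
    fix m' assume "m' \<in> Poly_Mapping.keys (pderiv_var u p)"
    then obtain m where m: "m \<in> Poly_Mapping.keys p" "Poly_Mapping.lookup m u \<noteq> 0"
      and m': "m' = m - Poly_Mapping.single u 1"
      using keys_pderiv_var by blast
    from m(1) assms obtain v where "m = Poly_Mapping.single v 1"
      unfolding linear_form_def by blast
    with m(2) m' show "m' \<in> {0}"
      by (cases "v = u") (simp_all add: lookup_single)
  qed
  then show ?thesis
    unfolding vars_def by auto
qed

lemma vars_der_bracket:
  assumes "linear_form (P w)"
  shows "vars (der_bracket P Q w)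
    \<subseteq> vars (Q w) \<union> (\<Union>u\<in>vars (Q w). vars (P u)) \<union> (\<Union>u\<in>vars (P w). vars (Q u))"
proof -
  have first: "vars (P u * pderiv_var u (Q w)) \<subseteq> vars (P u) \<union> vars (Q w)" for u
    using vars_mult vars_pderiv_var by blast
  have second: "vars (Q u * pderiv_var u (P w)) \<subseteq> vars (Q u)" for u
    using vars_mult[of "Q u"] vars_pderiv_var_linear_form[OF assms] by blast
  have "vars (der_bracket P Q w)
      \<subseteq> (\<Union>u\<in>vars (Q w). vars (P u * pderiv_var u (Q w)))
        \<union> (\<Union>u\<in>vars (P w). vars (Q u * pderiv_var u (P w)))"
    unfolding der_bracket_def by (intro order.trans[OF vars_diff] Un_mono vars_sum)
  also have "\<dots> \<subseteq> vars (Q w) \<union> (\<Union>u\<in>vars (Q w). vars (P u)) \<union> (\<Union>u\<in>vars (P w). vars (Q u))"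
    using first second by blast
  finally show ?thesis .
qed

lemma gap_at_der_bracket:
  assumes linear: "\<forall>u. linear_form (P u)"
    and bounded: "shift_bounded L P"
    and "0 \<le> L"
    and gap_near: "\<forall>n'. \<bar>n' - n\<bar> \<le> L \<longrightarrow> gap_at (K + L) Q n'"
  shows "gap_at K (der_bracket P Q) n"
  unfolding gap_at_def
proof (intro allI subsetI)
  fix a x
  assume x: "x \<in> vars (der_bracket P Q (a, n))"
  obtain b m where x_eq: "x = (b, m)" by fastforce
  have Q_n: "vars (Q (a', n)) \<subseteq> {(b, m). \<bar>m\<bar> < \<bar>n\<bar> - (K + L)}" for a'
    using gap_near \<open>0 \<le> L\<close> unfolding gap_at_def by simp
  from x vars_der_bracket[of P "(a, n)" Q] linear consider
      "x \<in> vars (Q (a, n))"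
    | u where "u \<in> vars (Q (a, n))" "x \<in> vars (P u)"
    | u where "u \<in> vars (P (a, n))" "x \<in> vars (Q u)"
    by blast
  then show "x \<in> {(b, m). \<bar>m\<bar> < \<bar>n\<bar> - K}"
  proof cases
    case 1
    then show ?thesis using Q_n \<open>0 \<le> L\<close> x_eq by fastforce
  next
    case (2 u)
    obtain b' m' where u_eq: "u = (b', m')" by fastforce
    have "\<bar>m'\<bar> < \<bar>n\<bar> - (K + L)" "\<bar>m - m'\<bar> \<le> L"
      using 2 Q_n bounded x_eq u_eq unfolding shift_bounded_def by blast+
    then show ?thesis using x_eq by simp
  next
    case (3 u)
    obtain b' m' where u_eq: "u = (b', m')" by fastforce
    have "\<bar>m' - n\<bar> \<le> L"
      using 3 bounded u_eq unfolding shift_bounded_def by blast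
    then have "\<bar>m\<bar> < \<bar>m'\<bar> - (K + L)"
      using gap_near 3 x_eq u_eq unfolding gap_at_def by blast
    with \<open>\<bar>m' - n\<bar> \<le> L\<close> show ?thesis using x_eq by simp
  qed
qed

lemma widening_gap_der_bracket:
  assumes "\<forall>u. linear_form (P u)" and "shift_bounded L P" and "0 \<le> L"
    and "widening_gap Q"
  shows "widening_gap (der_bracket P Q)"
  unfolding widening_gap_iff_gap_at
proof (intro allI impI)
  fix K :: int
  assume "K \<ge> 1"
  define E where "E = {n. \<not> gap_at (K + L) Q n}"
  have "finite E"
    using \<open>widening_gap Q\<close> \<open>K \<ge> 1\<close> \<open>0 \<le> L\<close> unfolding E_def widening_gap_iff_gap_at by simp
  moreover have "{n. \<not> gap_at K (der_bracket P Q) n} \<subseteq> (\<Union>e\<in>E. {e - L..e + L})"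
  proof
    fix n assume "n \<in> {n. \<not> gap_at K (der_bracket P Q) n}"
    then obtain n' where "\<bar>n' - n\<bar> \<le> L" "n' \<in> E"
      using gap_at_der_bracket assms unfolding E_def by blast
    then show "n \<in> (\<Union>e\<in>E. {e - L..e + L})"
      by (intro UN_I[of n']) auto
  qed
  ultimately show "finite {n. \<not> gap_at K (der_bracket P Q) n}"
    by (simp add: finite_subset)
qed

lemma keys_cconst_mult_Xv: "Poly_Mapping.keys (cconst z * Xv u) \<subseteq> {Poly_Mapping.single u 1}"
  unfolding cconst_def Xv_def by (simp add: mult_single)

lemma keys_iota:
  "Poly_Mapping.keys (iota c d (a, n))
     \<subseteq> {Poly_Mapping.single (b, n - k) 1 | b k. k \<in> insert 0 (snd ` snd ` Poly_Mapping.keys c)}"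
    (is "_ \<subseteq> ?M")
proof -
  define f where "f = (\<lambda>(b, c', k). if c' = a
    then cconst (Poly_Mapping.lookup c (b, c', k)) * Xv (b, n - k) else (0 :: 'a cpoly))"
  define g where "g = cconst (d * of_int n) * Xv (a, n)"
  have keys_f: "Poly_Mapping.keys (f t) \<subseteq> ?M" if "t \<in> Poly_Mapping.keys c" for t
  proof -
    obtain b c' k where t: "t = (b, c', k)"
      by (cases t) blast
    with that have "Poly_Mapping.single (b, n - k) 1 \<in> ?M"
      by force
    then show ?thesis
      using keys_cconst_mult_Xv[of _ "(b, n - k)"] unfolding f_def t by auto
  qed
  have "Poly_Mapping.single (a, n - 0) 1 \<in> ?M"
    by blast
  then have keys_g: "Poly_Mapping.keys g \<subseteq> ?M"
    using keys_cconst_mult_Xv[of _ "(a, n)"] unfolding g_def by auto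
  have "iota c d (a, n) = sum f (Poly_Mapping.keys c) + g"
    unfolding iota_def f_def g_def by simp
  then have "Poly_Mapping.keys (iota c d (a, n)) \<subseteq> (\<Union>t\<in>Poly_Mapping.keys c. Poly_Mapping.keys (f t)) \<union> Poly_Mapping.keys g"
    using keys_add[of "sum f (Poly_Mapping.keys c)" g] keys_sum[of f "Poly_Mapping.keys c"] by auto
  also have "\<dots> \<subseteq> ?M"
    using keys_f keys_g by blast
  finally show ?thesis .
qed

lemma linear_form_iota: "linear_form (iota c d u)"
proof -
  obtain a n where "u = (a, n)" by fastforce
  with keys_iota[of c d a n] show ?thesis
    unfolding linear_form_def by blast
qed

lemma shift_bounded_iota: "shift_bounded (Max (abs ` insert 0 (snd ` snd ` Poly_Mapping.keys c))) (iota c d)"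
  unfolding shift_bounded_def
proof (intro allI impI)
  fix a n b m
  assume "(b, m) \<in> vars (iota c d (a, n))"
  then obtain mon where mon: "mon \<in> Poly_Mapping.keys (iota c d (a, n))" "(b, m) \<in> Poly_Mapping.keys mon"
    unfolding vars_def by blast
  from keys_iota[of c d a n] mon(1) obtain b' k
    where "mon = Poly_Mapping.single (b', n - k) 1" "k \<in> insert 0 (snd ` snd ` Poly_Mapping.keys c)"
    by blast
  with mon(2) have "k \<in> insert 0 (snd ` snd ` Poly_Mapping.keys c)" "m = n - k"
    by simp_all
  then show "\<bar>m - n\<bar> \<le> Max (abs ` insert 0 (snd ` snd ` Poly_Mapping.keys c))"
    by (intro Max_ge) auto
qed

theorem lemma3p6:
  fixes c :: "('i::finite \<times> 'i \<times> int) \<Rightarrow>\<^sub>0 complex"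
    and d :: complex
    and v :: "'i der"
  assumes "v \<in> Der_w"
  shows "der_bracket (iota c d) v \<in> Der_w"
proof -
  let ?L = "Max (abs ` insert 0 (snd ` snd ` Poly_Mapping.keys c))"
  have "0 \<le> ?L"
    by (intro Max_ge) auto
  moreover have "\<forall>u. linear_form (iota c d u)"
    using linear_form_iota by blast
  ultimately have "widening_gap (der_bracket (iota c d) v)"
    using shift_bounded_iota assms unfolding Der_w_def by (intro widening_gap_der_bracket) auto
  then show ?thesis
    unfolding Der_w_def by simp
qed

end
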